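(* If $S$ and $T$ are semigroups each containing an element of infinite order, then the direct product $S\times T$ contains uncountably many pairwise non-isomorphic subsemigroups.
   Context: An element $x$ of a semigroup has infinite order if the powers $x,x^2,x^3,\dots$ are pairwise distinct. $S\times T$ is the direct product with componentwise multiplication. *)

theory Defs
  imports Main "HOL-Library.Countable_Set"
begin

text \<open>Positive powers in a semigroup: spow x n = x to the power (n+1).\<close>
fun spow :: "'a::semigroup_mult \<Rightarrow> nat \<Rightarrow> 'a" where
  "spow x 0 = x"
| "spow x (Suc n) = spow x n * x"

definition infinite_order :: "'a::semigroup_mult \<Rightarrow> bool" where
  "infinite_order x \<longleftrightarrow> inj (spow x)"

definition prod_mult :: "('a::semigroup_mult \<times> 'b::semigroup_mult) \<Rightarrow> ('a \<times> 'b) \<Rightarrow> ('a \<times> 'b)" where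
  "prod_mult p q = (fst p * fst q, snd p * snd q)"

definition subsemigroup :: "('c \<Rightarrow> 'c \<Rightarrow> 'c) \<Rightarrow> 'c set \<Rightarrow> bool" where
  "subsemigroup m A \<longleftrightarrow> A \<noteq> {} \<and> (\<forall>x\<in>A. \<forall>y\<in>A. m x y \<in> A)"

definition semigroup_iso :: "('c \<Rightarrow> 'c \<Rightarrow> 'c) \<Rightarrow> 'c set \<Rightarrow> 'c set \<Rightarrow> bool" where
  "semigroup_iso m A B \<longleftrightarrow>
     (\<exists>f. bij_betw f A B \<and> (\<forall>x\<in>A. \<forall>y\<in>A. f (m x y) = m (f x) (f y)))"

end

theory Submission
  imports Defs
begin

text \<open>For a set \<open>I\<close> of naturals let \<open>N\<^sub>I\<close> be the additive subsemigroup of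
  \<open>\<nat> \<times> \<nat>\<close> generated by the pairs \<open>(p, (j+2) p)\<close> with \<open>j \<in> I\<close> and
  \<open>p \<in> {j+2, j+3}\<close>. These generators are exactly the indecomposable elements of \<open>N\<^sub>I\<close>, and
  two of them, \<open>a\<close> and \<open>b\<close>, satisfy \<open>(k+3) a = (k+2) b\<close> precisely when they are the two
  generators belonging to \<open>j = k\<close>. Hence \<open>I\<close> can be read off from the isomorphism type of
  \<open>N\<^sub>I\<close>, giving continuum many pairwise non-isomorphic semigroups. Each \<open>N\<^sub>I\<close> embeds
  into \<open>S \<times> T\<close> via \<open>(m, n) \<mapsto> (s\<^sup>m, t\<^sup>n)\<close> when \<open>s\<close> and \<open>t\<close> have infinite order.\<close>

definition mult_closed :: "('c \<Rightarrow> 'c \<Rightarrow> 'c) \<Rightarrow> 'c set \<Rightarrow> bool" where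
  "mult_closed m A \<longleftrightarrow> (\<forall>x\<in>A. \<forall>y\<in>A. m x y \<in> A)"

definition iso_betw :: "('c \<Rightarrow> 'c \<Rightarrow> 'c) \<Rightarrow> ('d \<Rightarrow> 'd \<Rightarrow> 'd) \<Rightarrow> ('c \<Rightarrow> 'd) \<Rightarrow> 'c set \<Rightarrow> 'd set \<Rightarrow> bool" where
  "iso_betw m1 m2 f A B \<longleftrightarrow> bij_betw f A B \<and> (\<forall>x\<in>A. \<forall>y\<in>A. f (m1 x y) = m2 (f x) (f y))"

lemma semigroup_iso_iff_iso_betw: "semigroup_iso m A B \<longleftrightarrow> (\<exists>f. iso_betw m m f A B)"
  by (simp add: semigroup_iso_def iso_betw_def)

lemma iso_betw_mult_closed:
  assumes iso: "iso_betw m1 m2 f A B" and cl: "mult_closed m1 A"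
  shows "mult_closed m2 B"
  unfolding mult_closed_def
proof (intro ballI)
  fix u v assume "u \<in> B" "v \<in> B"
  then obtain x y where "x \<in> A" "y \<in> A" "u = f x" "v = f y"
    using iso by (auto simp: iso_betw_def bij_betw_def)
  then show "m2 u v \<in> B"
    using iso cl by (metis bij_betw_apply iso_betw_def mult_closed_def)
qed

lemma iso_betw_the_inv_into:
  assumes iso: "iso_betw m1 m2 f A B" and cl: "mult_closed m1 A"
  shows "iso_betw m2 m1 (the_inv_into A f) B A"
  unfolding iso_betw_def
proof (intro conjI ballI)
  let ?g = "the_inv_into A f"
  have bij: "bij_betw f A B" using iso by (simp add: iso_betw_def)
  then show "bij_betw ?g B A" by (rule bij_betw_the_inv_into)
  fix u v assume "u \<in> B" "v \<in> B"
  then have g: "?g u \<in> A" "?g v \<in> A" "f (?g u) = u" "f (?g v) = v"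
    using bij by (auto simp: f_the_inv_into_f_bij_betw bij_betw_def the_inv_into_into)
  then have "m2 u v = f (m1 (?g u) (?g v))"
    using iso by (metis iso_betw_def)
  moreover have "m1 (?g u) (?g v) \<in> A" using cl g by (simp add: mult_closed_def)
  ultimately show "?g (m2 u v) = m1 (?g u) (?g v)"
    using bij by (simp add: the_inv_into_f_f bij_betw_def)
qed

lemma iso_betw_comp:
  assumes "iso_betw m1 m2 f A B" "iso_betw m2 m3 g B C"
  shows "iso_betw m1 m3 (g \<circ> f) A C"
  using assms by (auto simp: iso_betw_def bij_betw_trans bij_betw_apply)

fun mpow :: "('c \<Rightarrow> 'c \<Rightarrow> 'c) \<Rightarrow> nat \<Rightarrow> 'c \<Rightarrow> 'c" where
  "mpow m 0 x = x"
| "mpow m (Suc n) x = m (mpow m n x) x"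

lemma mpow_mem: "mult_closed m A \<Longrightarrow> x \<in> A \<Longrightarrow> mpow m n x \<in> A"
  by (induction n) (auto simp: mult_closed_def)

lemma iso_betw_mpow:
  assumes "iso_betw m1 m2 f A B" "mult_closed m1 A" "x \<in> A"
  shows "f (mpow m1 n x) = mpow m2 n (f x)"
  using assms by (induction n) (auto simp: iso_betw_def mpow_mem)

definition indecomposable :: "('c \<Rightarrow> 'c \<Rightarrow> 'c) \<Rightarrow> 'c set \<Rightarrow> 'c \<Rightarrow> bool" where
  "indecomposable m A a \<longleftrightarrow> a \<in> A \<and> (\<forall>x\<in>A. \<forall>y\<in>A. m x y \<noteq> a)"

lemma iso_betw_indecomposable:
  assumes iso: "iso_betw m1 m2 f A B" and cl: "mult_closed m1 A"
    and a: "indecomposable m1 A a"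
  shows "indecomposable m2 B (f a)"
  unfolding indecomposable_def
proof (intro conjI ballI)
  have bij: "bij_betw f A B" and aA: "a \<in> A"
    using iso a by (simp_all add: iso_betw_def indecomposable_def)
  then show "f a \<in> B" by (simp add: bij_betw_apply)
  fix u v assume "u \<in> B" "v \<in> B"
  then obtain x y where xy: "x \<in> A" "y \<in> A" "u = f x" "v = f y"
    using bij by (auto simp: bij_betw_def)
  show "m2 u v \<noteq> f a"
  proof
    assume "m2 u v = f a"
    then have "f (m1 x y) = f a" using iso xy by (simp add: iso_betw_def)
    moreover have "m1 x y \<in> A" using cl xy by (simp add: mult_closed_def)
    ultimately have "m1 x y = a" using bij aA by (auto simp: bij_betw_def inj_on_def)
    then show False using a xy by (simp add: indecomposable_def)
  qed
qed

text \<open>\<open>mpow m n x\<close> is the \<open>(n+1)\<close>-th power, so this says \<open>a\<^bsup>k+3\<^esup> = b\<^bsup>k+2\<^esup>\<close>.\<close>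

definition atom_power_relation :: "nat \<Rightarrow> ('c \<Rightarrow> 'c \<Rightarrow> 'c) \<Rightarrow> 'c set \<Rightarrow> bool" where
  "atom_power_relation k m A \<longleftrightarrow>
     (\<exists>a b. indecomposable m A a \<and> indecomposable m A b \<and> mpow m (k+2) a = mpow m (k+1) b)"

lemma iso_betw_atom_power_relation:
  assumes iso: "iso_betw m1 m2 f A B" and cl: "mult_closed m1 A"
    and rel: "atom_power_relation k m1 A"
  shows "atom_power_relation k m2 B"
proof -
  obtain a b where ab: "indecomposable m1 A a" "indecomposable m1 A b"
      "mpow m1 (k+2) a = mpow m1 (k+1) b"
    using rel by (auto simp: atom_power_relation_def)
  then have "mpow m2 (k+2) (f a) = mpow m2 (k+1) (f b)"
    using iso_betw_mpow[OF iso cl] by (metis indecomposable_def)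
  then show ?thesis
    using ab iso_betw_indecomposable[OF iso cl] unfolding atom_power_relation_def by blast
qed

definition padd :: "nat \<times> nat \<Rightarrow> nat \<times> nat \<Rightarrow> nat \<times> nat" where
  "padd x y = (fst x + fst y, snd x + snd y)"

lemma mpow_padd: "mpow padd n x = ((n+1) * fst x, (n+1) * snd x)"
  by (induction n) (auto simp: padd_def)

definition generators :: "nat set \<Rightarrow> (nat \<times> nat) set" where
  "generators I = {(p, (j+2) * p) | j p. j \<in> I \<and> (p = j+2 \<or> p = j+3)}"

inductive_set generated :: "nat set \<Rightarrow> (nat \<times> nat) set" for I where
  base: "x \<in> generators I \<Longrightarrow> x \<in> generated I"
| add: "x \<in> generated I \<Longrightarrow> y \<in> generated I \<Longrightarrow> padd x y \<in> generated I"

lemma mult_closed_generated: "mult_closed padd (generated I)"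
  by (auto simp: mult_closed_def intro: generated.add)

lemma generated_bounds: "x \<in> generated I \<Longrightarrow> 2 \<le> fst x \<and> 1 \<le> snd x \<and> snd x \<le> fst x * fst x"
proof (induction rule: generated.induct)
  case (base x)
  then obtain j p where "x = (p, (j+2) * p)" "j + 2 \<le> p"
    by (auto simp: generators_def)
  then show ?case using mult_le_mono1[of "j+2" p p] by simp
next
  case (add x y)
  have "snd x + snd y \<le> fst x * fst x + fst y * fst y" using add.IH by (simp add: add_mono)
  also have "\<dots> \<le> (fst x + fst y) * (fst x + fst y)" by (simp add: algebra_simps)
  finally show ?case using add.IH by (simp add: padd_def)
qed

text \<open>The second coordinate of a sum is small compared to the square of the first, while that
  of a generator is not.\<close>

lemma padd_generated_bound:
  assumes "x \<in> generated I" "y \<in> generated I"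
  shows "snd (padd x y) + 2 * fst (padd x y) \<le> fst (padd x y) * fst (padd x y) + 2"
proof -
  obtain a b c d where x: "x = (a, b)" and y: "y = (c, d)" by fastforce
  have "1 \<le> a" "b \<le> a * a" "1 \<le> c" "d \<le> c * c"
    using generated_bounds assms x y by force+
  moreover obtain a' c' where "a = a' + 1" "c = c' + 1"
    using \<open>1 \<le> a\<close> \<open>1 \<le> c\<close> by (metis add.commute le_add_diff_inverse)
  ultimately have "b + d + 2 * (a + c) \<le> (a + c) * (a + c) + 2"
    by (simp add: algebra_simps)
  then show ?thesis using x y by (simp add: padd_def)
qed

lemma indecomposable_generated_iff:
  "indecomposable padd (generated I) a \<longleftrightarrow> a \<in> generators I"
proof
  assume a: "indecomposable padd (generated I) a"
  then have "a \<in> generated I" by (simp add: indecomposable_def)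
  then show "a \<in> generators I"
    by cases (use a in \<open>auto simp: indecomposable_def\<close>)
next
  assume a: "a \<in> generators I"
  then obtain j p where jp: "a = (p, (j+2) * p)" "p = j+2 \<or> p = j+3"
    by (auto simp: generators_def)
  have "padd x y \<noteq> a" if "x \<in> generated I" "y \<in> generated I" for x y
    using padd_generated_bound[OF that] jp by (auto simp: algebra_simps)
  then show "indecomposable padd (generated I) a"
    using a by (auto simp: indecomposable_def intro: generated.base)
qed

lemma atom_power_relation_generated_iff: "atom_power_relation k padd (generated I) \<longleftrightarrow> k \<in> I"
proof
  assume "k \<in> I"
  then have "(k+2, (k+2) * (k+2)) \<in> generators I" "(k+3, (k+2) * (k+3)) \<in> generators I"
    by (auto simp: generators_def)
  moreover have "mpow padd (k+2) (k+2, (k+2) * (k+2)) = mpow padd (k+1) (k+3, (k+2) * (k+3))"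
    unfolding mpow_padd by (simp add: algebra_simps)
  ultimately show "atom_power_relation k padd (generated I)"
    unfolding atom_power_relation_def indecomposable_generated_iff by blast
next
  assume "atom_power_relation k padd (generated I)"
  then obtain i j p q where ij: "i \<in> I" "p = i+2 \<or> p = i+3" "q = j+2 \<or> q = j+3"
    and eq: "mpow padd (k+2) (p, (i+2) * p) = mpow padd (k+1) (q, (j+2) * q)"
    unfolding atom_power_relation_def indecomposable_generated_iff generators_def by blast
  then have e1: "(k+3) * p = (k+2) * q" and e2: "(k+3) * ((i+2) * p) = (k+2) * ((j+2) * q)"
    unfolding mpow_padd by (simp_all add: algebra_simps)
  have "(i+2) * ((k+3) * p) = (j+2) * ((k+3) * p)"
    using e1 e2 by (metis mult.left_commute)
  then have "i = j" using ij(2) by auto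
  then have "k = i" using ij e1 by (auto simp: algebra_simps)
  then show "k \<in> I" using ij(1) by simp
qed

lemma iso_generated_subset:
  assumes "iso_betw padd padd f (generated I) (generated J)"
  shows "I \<subseteq> J"
  using iso_betw_atom_power_relation[OF assms mult_closed_generated]
  by (auto simp: atom_power_relation_generated_iff)

definition power_embedding :: "'a::semigroup_mult \<Rightarrow> 'b::semigroup_mult \<Rightarrow> nat \<times> nat \<Rightarrow> 'a \<times> 'b" where
  "power_embedding s t x = (spow s (fst x - 1), spow t (snd x - 1))"

lemma spow_mult: "spow x a * spow x b = spow x (a + b + 1)"
  by (induction b) (simp_all add: mult.assoc[symmetric])

lemma iso_betw_power_embedding:
  assumes "infinite_order s" "infinite_order t"
  shows "iso_betw padd prod_mult (power_embedding s t) (generated I)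
           (power_embedding s t ` generated I)"
  unfolding iso_betw_def bij_betw_def
proof (intro conjI ballI inj_onI refl)
  fix x y assume "x \<in> generated I" "y \<in> generated I"
  then have pos: "1 \<le> fst x" "1 \<le> snd x" "1 \<le> fst y" "1 \<le> snd y"
    using generated_bounds by fastforce+
  then have "fst x + fst y - 1 = (fst x - 1) + (fst y - 1) + 1"
    "snd x + snd y - 1 = (snd x - 1) + (snd y - 1) + 1" by simp_all
  then show "power_embedding s t (padd x y) =
      prod_mult (power_embedding s t x) (power_embedding s t y)"
    by (simp only: power_embedding_def padd_def prod_mult_def fst_conv snd_conv spow_mult)
  assume "power_embedding s t x = power_embedding s t y"
  then have "fst x - 1 = fst y - 1" "snd x - 1 = snd y - 1"
    using assms by (auto simp: power_embedding_def infinite_order_def inj_def)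
  then show "x = y" using pos by (simp add: prod_eq_iff, linarith)
qed

lemma iso_power_embedding_generated_eq:
  assumes "infinite_order s" "infinite_order t"
    and "semigroup_iso prod_mult (power_embedding s t ` generated I) (power_embedding s t ` generated J)"
  shows "I = J"
proof -
  let ?e = "power_embedding s t"
  obtain f where f: "iso_betw prod_mult prod_mult f (?e ` generated I) (?e ` generated J)"
    using assms(3) by (auto simp: semigroup_iso_iff_iso_betw)
  have eI: "iso_betw padd prod_mult ?e (generated I) (?e ` generated I)"
    and eJ: "iso_betw padd prod_mult ?e (generated J) (?e ` generated J)"
    using iso_betw_power_embedding[OF assms(1,2)] by blast+
  have "iso_betw padd padd (the_inv_into (generated J) ?e \<circ> (f \<circ> ?e)) (generated I) (generated J)"
    by (rule iso_betw_comp[OF iso_betw_comp[OF eI f] iso_betw_the_inv_into[OF eJ mult_closed_generated]])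
  then have "iso_betw padd padd (the_inv_into (generated I) (the_inv_into (generated J) ?e \<circ> (f \<circ> ?e)))
      (generated J) (generated I)"
    by (rule iso_betw_the_inv_into[OF _ mult_closed_generated])
  with \<open>iso_betw padd padd _ (generated I) (generated J)\<close> show "I = J"
    by (blast dest: iso_generated_subset)
qed

lemma uncountable_UNIV_nat_set: "uncountable (UNIV :: nat set set)"
proof
  assume "countable (UNIV :: nat set set)"
  then obtain f :: "nat \<Rightarrow> nat set" where "range f = UNIV"
    by (metis uncountable_def UNIV_not_empty)
  then obtain n where "f n = {m. m \<notin> f m}" by (metis UNIV_I imageE)
  then show False by blast
qed

theorem corollaryC:
  fixes s :: "'a::semigroup_mult" and t :: "'b::semigroup_mult"
  assumes "infinite_order s" and "infinite_order t"
  shows "\<exists>\<F> :: ('a \<times> 'b) set set. uncountable \<F> \<and>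
           (\<forall>A\<in>\<F>. subsemigroup prod_mult A) \<and>
           (\<forall>A\<in>\<F>. \<forall>B\<in>\<F>. A \<noteq> B \<longrightarrow> \<not> semigroup_iso prod_mult A B)"
proof -
  text \<open>Inserting \<open>0\<close> into every index set keeps the semigroups nonempty.\<close>
  define N where "N X = power_embedding s t ` generated (insert 0 (Suc ` X))" for X
  have iso_eq: "X = Y" if "semigroup_iso prod_mult (N X) (N Y)" for X Y
    using iso_power_embedding_generated_eq[OF assms that[unfolded N_def]] by (auto simp: inj_image_eq_iff)
  have "inj N"
    by (rule injI, rule iso_eq) (auto simp: semigroup_iso_iff_iso_betw iso_betw_def intro!: exI[of _ id])
  then have "uncountable (range N)"
    using countable_image_inj_on uncountable_UNIV_nat_set by blast
  moreover have "subsemigroup prod_mult (N X)" for X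
  proof -
    have "(2, 4) \<in> generators (insert 0 (Suc ` X))" by (force simp: generators_def)
    then have "N X \<noteq> {}" by (auto simp: N_def intro: generated.base)
    then show ?thesis
      using iso_betw_mult_closed[OF iso_betw_power_embedding[OF assms] mult_closed_generated]
      by (simp add: subsemigroup_def mult_closed_def N_def)
  qed
  ultimately show ?thesis using iso_eq by blast
qed

end
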